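(* Let $f:\Gamma\to\Gamma$ be an irreducible, expanding graph map with stacks $\mathcal{K}_1,\dots,\mathcal{K}_p$ and final edges $\alpha_1,\dots,\alpha_p$. If there is a directed path $P$ in the stack graph $\mathcal{SG}(f)$ from $\mathcal{K}_i$ to $\mathcal{K}_j$ with $s(P)=d$, then $f^d(\alpha_i)$ traverses $\alpha_j$.
   Context: A graph $\Gamma$ is a finite 1-dimensional CW complex with a chosen orientation on each edge; $\mathcal{E}\Gamma$ is its set of edges, $\bar e$ is the reverse of $e$, $\iota,\tau$ the endpoints. An edge path is a nonempty concatenation $u=e_1\cdots e_k$ of oriented edges with $\tau(e_i)=\iota(e_{i+1})$; $|u|=k$ (no cancellation); $u$ traverses $e$ if $e$ or $\bar e$ occurs in it. A graph map $f:\Gamma\to\Gamma$ assigns to vertices vertices and to each oriented edge $e$ an edge path $f(e)$ with $\iota(f(e))=f(\iota(e))$, $f(\bar e)=\overline{f(e)}$; powers $f^d$ are compositions, applied to paths by concatenation without tightening. $T(f)$ has $(i,j)$ entry the number of times $f(e_i)$ traverses $e_j$; $f$ is irreducible if $T(f)$ is irreducible and every vertex has valence $\ge3$; expanding if $|f^n(e)|\to\infty$ for every edge. Stacks: $e$ is mixing if $|f(e)|>1$; surplus if non-mixing and $f(e)\in\{f(u),\overline{f(u)}\}$ for some edge $u\notin\{e,\bar e\}$. Stacks are the classes of the equivalence relation on $\mathcal{E}\Gamma$ (unoriented edges) generated by $e\sim f(e)$ for $e$ non-mixing and non-surplus. Each stack has the form $\mathcal{K}=\{e,f(e),\dots,f^s(e)\}$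 with only $f^s(e)$ mixing or surplus; $f^s(e)$ is the final edge of $\mathcal{K}$. Let $\alpha_i$ be the final edge of $\mathcal{K}_i$. The stack graph $\mathcal{SG}(f)$ is the directed graph with vertex set $\{\mathcal{K}_1,\dots,\mathcal{K}_p\}$ and a directed edge $[\mathcal{K}_i,\mathcal{K}_j]$ whenever $f(\alpha_i)$ contains an edge of $\mathcal{K}_j$. The length of such an edge is $s([\mathcal{K}_i,\mathcal{K}_j])=\min\{s\ge1: f^s(\alpha_i)\text{ traverses }\alpha_j\}$. For a directed path $P=E_1\cdots E_k$ (traversing edges only in their positive direction), $s(P)=\sum_i s(E_i)$. *)

theory Defs
  imports Main
begin

text \<open>A graph: vertex set V, set E of (positively oriented) edges, endpoint maps src, tgt.
  An oriented edge is a pair (e, b): (e, True) is e, (e, False) is its reverse.\<close>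

type_synonym 'e oedge = "'e \<times> bool"

fun oinit :: "('e \<Rightarrow> 'v) \<Rightarrow> ('e \<Rightarrow> 'v) \<Rightarrow> 'e oedge \<Rightarrow> 'v" where
  "oinit src tgt (e, b) = (if b then src e else tgt e)"

fun oterm :: "('e \<Rightarrow> 'v) \<Rightarrow> ('e \<Rightarrow> 'v) \<Rightarrow> 'e oedge \<Rightarrow> 'v" where
  "oterm src tgt (e, b) = (if b then tgt e else src e)"

fun orev :: "'e oedge \<Rightarrow> 'e oedge" where
  "orev (e, b) = (e, \<not> b)"

definition rev_path :: "'e oedge list \<Rightarrow> 'e oedge list" where
  "rev_path u = rev (map orev u)"

definition is_edge_path :: "'e set \<Rightarrow> ('e \<Rightarrow> 'v) \<Rightarrow> ('e \<Rightarrow> 'v) \<Rightarrow> 'e oedge list \<Rightarrow> bool" where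
  "is_edge_path E src tgt u \<longleftrightarrow> u \<noteq> [] \<and> (\<forall>x\<in>set u. fst x \<in> E) \<and>
     (\<forall>i. i + 1 < length u \<longrightarrow> oterm src tgt (u ! i) = oinit src tgt (u ! (i + 1)))"

definition traverses :: "'e oedge list \<Rightarrow> 'e \<Rightarrow> bool" where
  "traverses u e \<longleftrightarrow> e \<in> fst ` set u"

text \<open>A graph map is given by a vertex map fv and the images fe e of positively oriented edges;
  f(\<bar>e) is the reverse path of f(e).\<close>
definition graph_map :: "'v set \<Rightarrow> 'e set \<Rightarrow> ('e \<Rightarrow> 'v) \<Rightarrow> ('e \<Rightarrow> 'v) \<Rightarrow> ('v \<Rightarrow> 'v)
    \<Rightarrow> ('e \<Rightarrow> 'e oedge list) \<Rightarrow> bool" where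
  "graph_map V E src tgt fv fe \<longleftrightarrow> finite V \<and> finite E \<and> src ` E \<subseteq> V \<and> tgt ` E \<subseteq> V \<and>
     fv ` V \<subseteq> V \<and>
     (\<forall>e\<in>E. is_edge_path E src tgt (fe e) \<and> oinit src tgt (hd (fe e)) = fv (src e)
            \<and> oterm src tgt (last (fe e)) = fv (tgt e))"

fun omap :: "('e \<Rightarrow> 'e oedge list) \<Rightarrow> 'e oedge \<Rightarrow> 'e oedge list" where
  "omap fe (e, b) = (if b then fe e else rev_path (fe e))"

text \<open>image of a path (concatenation, no tightening) and powers f^n\<close>
definition fpath :: "('e \<Rightarrow> 'e oedge list) \<Rightarrow> 'e oedge list \<Rightarrow> 'e oedge list" where
  "fpath fe u = concat (map (omap fe) u)"

definition fpow :: "('e \<Rightarrow> 'e oedge list) \<Rightarrow> nat \<Rightarrow> 'e oedge \<Rightarrow> 'e oedge list" where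
  "fpow fe n x = (fpath fe ^^ n) [x]"

definition tmat :: "('e \<Rightarrow> 'e oedge list) \<Rightarrow> 'e \<Rightarrow> 'e \<Rightarrow> nat" where
  "tmat fe e e' = length (filter (\<lambda>x. fst x = e') (fe e))"

fun tmat_pow :: "'e set \<Rightarrow> ('e \<Rightarrow> 'e oedge list) \<Rightarrow> nat \<Rightarrow> 'e \<Rightarrow> 'e \<Rightarrow> nat" where
  "tmat_pow E fe 0 i j = (if i = j then 1 else 0)"
| "tmat_pow E fe (Suc n) i j = (\<Sum>k\<in>E. tmat_pow E fe n i k * tmat fe k j)"

definition irreducible_matrix :: "'e set \<Rightarrow> ('e \<Rightarrow> 'e oedge list) \<Rightarrow> bool" where
  "irreducible_matrix E fe \<longleftrightarrow> (\<forall>i\<in>E. \<forall>j\<in>E. \<exists>n>0. tmat_pow E fe n i j > 0)"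

text \<open>valence: number of oriented edges starting at v (loops count twice)\<close>
definition valence :: "'e set \<Rightarrow> ('e \<Rightarrow> 'v) \<Rightarrow> ('e \<Rightarrow> 'v) \<Rightarrow> 'v \<Rightarrow> nat" where
  "valence E src tgt v = card {e\<in>E. src e = v} + card {e\<in>E. tgt e = v}"

definition irreducible_map :: "'v set \<Rightarrow> 'e set \<Rightarrow> ('e \<Rightarrow> 'v) \<Rightarrow> ('e \<Rightarrow> 'v)
    \<Rightarrow> ('e \<Rightarrow> 'e oedge list) \<Rightarrow> bool" where
  "irreducible_map V E src tgt fe \<longleftrightarrow> irreducible_matrix E fe \<and> (\<forall>v\<in>V. valence E src tgt v \<ge> 3)"

definition expanding :: "'e set \<Rightarrow> ('e \<Rightarrow> 'e oedge list) \<Rightarrow> bool" where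
  "expanding E fe \<longleftrightarrow> (\<forall>e\<in>E. \<forall>M. \<exists>N. \<forall>n\<ge>N. length (fpow fe n (e, True)) \<ge> M)"

definition mixing :: "('e \<Rightarrow> 'e oedge list) \<Rightarrow> 'e \<Rightarrow> bool" where
  "mixing fe e \<longleftrightarrow> length (fe e) > 1"

definition surplus :: "'e set \<Rightarrow> ('e \<Rightarrow> 'e oedge list) \<Rightarrow> 'e \<Rightarrow> bool" where
  "surplus E fe e \<longleftrightarrow> \<not> mixing fe e \<and>
     (\<exists>u\<in>E. u \<noteq> e \<and> (fe e = fe u \<or> fe e = rev_path (fe u)))"

text \<open>generating relation e ~ f(e) for non-mixing, non-surplus e, and its equivalence closure on E\<close>
definition stack_step :: "'e set \<Rightarrow> ('e \<Rightarrow> 'e oedge list) \<Rightarrow> ('e \<times> 'e) set" where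
  "stack_step E fe = {(e, fst (hd (fe e))) | e. e \<in> E \<and> \<not> mixing fe e \<and> \<not> surplus E fe e}"

definition stack_equiv :: "'e set \<Rightarrow> ('e \<Rightarrow> 'e oedge list) \<Rightarrow> ('e \<times> 'e) set" where
  "stack_equiv E fe = Id_on E \<union> (stack_step E fe \<union> (stack_step E fe)\<inverse>)\<^sup>+"

definition stacks :: "'e set \<Rightarrow> ('e \<Rightarrow> 'e oedge list) \<Rightarrow> 'e set set" where
  "stacks E fe = E // stack_equiv E fe"

definition final_edge :: "'e set \<Rightarrow> ('e \<Rightarrow> 'e oedge list) \<Rightarrow> 'e set \<Rightarrow> 'e" where
  "final_edge E fe K = (THE a. a \<in> K \<and> (mixing fe a \<or> surplus E fe a))"

definition sg_edge :: "'e set \<Rightarrow> ('e \<Rightarrow> 'e oedge list) \<Rightarrow> 'e set \<Rightarrow> 'e set \<Rightarrow> bool" where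
  "sg_edge E fe K L \<longleftrightarrow> K \<in> stacks E fe \<and> L \<in> stacks E fe \<and>
     (\<exists>x\<in>set (fe (final_edge E fe K)). fst x \<in> L)"

definition sg_len :: "'e set \<Rightarrow> ('e \<Rightarrow> 'e oedge list) \<Rightarrow> 'e set \<Rightarrow> 'e set \<Rightarrow> nat" where
  "sg_len E fe K L = (LEAST s. s \<ge> 1 \<and>
      traverses (fpow fe s (final_edge E fe K, True)) (final_edge E fe L))"

text \<open>a directed path E_1...E_k (k >= 1) in the stack graph, given by its vertex sequence
  K_0, ..., K_k (edges of the stack graph are determined by their endpoints)\<close>
definition sg_path :: "'e set \<Rightarrow> ('e \<Rightarrow> 'e oedge list) \<Rightarrow> 'e set list \<Rightarrow> bool" where
  "sg_path E fe Ks \<longleftrightarrow> length Ks \<ge> 2 \<and>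
     (\<forall>i. i + 1 < length Ks \<longrightarrow> sg_edge E fe (Ks ! i) (Ks ! (i + 1)))"

definition sg_path_len :: "'e set \<Rightarrow> ('e \<Rightarrow> 'e oedge list) \<Rightarrow> 'e set list \<Rightarrow> nat" where
  "sg_path_len E fe Ks = (\<Sum>i<length Ks - 1. sg_len E fe (Ks ! i) (Ks ! (i + 1)))"

end

theory Submission
  imports Defs
begin

text \<open>Traversal composes: the edges traversed by f(u) are determined by those traversed by u,
  so if f^s(a) traverses b and f^t(b) traverses c, then f^(s+t)(a) traverses c.  Within a stack
  every non-final edge is mapped onto a single edge of the same stack; by expansion this orbit
  cannot go on forever, so it reaches a mixing or surplus edge of the stack, and that edge is the
  final one because the stack relation is generated by a function.  Hence for an edge [K, L] of
  the stack graph some f^s(alpha_K) with s >= 1 traverses alpha_L, so s([K, L]) is attained, and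
  composing along the path gives the claim.\<close>

definition image_edges :: "('e \<Rightarrow> 'e oedge list) \<Rightarrow> 'e set \<Rightarrow> 'e set" where
  "image_edges fe A = (\<Union>e\<in>A. fst ` set (fe e))"

lemma mono_image_edges: "mono (image_edges fe)"
  unfolding image_edges_def mono_def by blast

lemma edges_omap: "fst ` set (omap fe x) = fst ` set (fe (fst x))"
  by (cases x) (force simp: rev_path_def image_image)

lemma edges_fpath: "fst ` set (fpath fe u) = image_edges fe (fst ` set u)"
  unfolding fpath_def image_edges_def by (auto simp: edges_omap[symmetric] image_UN)

lemma edges_fpath_funpow:
  "fst ` set ((fpath fe ^^ n) u) = (image_edges fe ^^ n) (fst ` set u)"
  by (induction n) (auto simp: edges_fpath)

lemma traverses_fpow_iff: "traverses (fpow fe n (a, b)) c \<longleftrightarrow> c \<in> (image_edges fe ^^ n) {a}"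
  unfolding traverses_def fpow_def edges_fpath_funpow by simp

lemma traverses_fpow_add:
  assumes "traverses (fpow fe m x) c" and "traverses (fpow fe n (c, b)) e"
  shows "traverses (fpow fe (m + n) x) e"
proof (cases x)
  case (Pair a b0)
  have "{c} \<subseteq> (image_edges fe ^^ m) {a}"
    using assms(1) Pair by (simp add: traverses_fpow_iff)
  then have "(image_edges fe ^^ n) {c} \<subseteq> (image_edges fe ^^ n) ((image_edges fe ^^ m) {a})"
    by (rule funpow_mono[OF mono_image_edges])
  also have "\<dots> = (image_edges fe ^^ (m + n)) {a}"
    by (simp only: add.commute[of m n] funpow_add comp_def)
  finally show ?thesis
    using assms(2) Pair by (auto simp: traverses_fpow_iff)
qed

lemma traverses_fpow_sum:
  assumes "\<And>i. i < n \<Longrightarrow> traverses (fpow fe (s i) (a i, True)) (a (Suc i))"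
  shows "traverses (fpow fe (\<Sum>i<n. s i) (a 0, True)) (a n)"
  using assms
proof (induction n)
  case 0
  show ?case by (simp add: traverses_fpow_iff)
next
  case (Suc n)
  have "traverses (fpow fe (\<Sum>i<n. s i) (a 0, True)) (a n)"
    using Suc by simp
  moreover have "traverses (fpow fe (s n) (a n, True)) (a (Suc n))"
    using Suc.prems by simp
  ultimately have "traverses (fpow fe ((\<Sum>i<n. s i) + s n) (a 0, True)) (a (Suc n))"
    by (rule traverses_fpow_add)
  then show ?case by simp
qed

lemma single_valued_common_successor:
  assumes "single_valued S" and "(a, b) \<in> (S \<union> S\<inverse>)\<^sup>*"
  shows "\<exists>w. (a, w) \<in> S\<^sup>* \<and> (b, w) \<in> S\<^sup>*"
  using assms(2)
proof (induction rule: rtrancl_induct)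
  case (step b c)
  then obtain w where aw: "(a, w) \<in> S\<^sup>*" and bw: "(b, w) \<in> S\<^sup>*" by blast
  from step.hyps(2) show ?case
  proof
    assume "(b, c) \<in> S"
    then have "(c, w) \<in> S\<^sup>* \<or> (w, c) \<in> S\<^sup>*"
      using single_valued_confluent[OF assms(1) _ bw] by blast
    then show ?thesis
      using aw by (blast intro: rtrancl_trans)
  next
    assume "(b, c) \<in> S\<inverse>"
    then show ?thesis using aw bw by (meson converse_iff converse_rtrancl_into_rtrancl)
  qed
qed blast

lemma single_valued_terminal_unique:
  assumes "single_valued S" and "(a, b) \<in> (S \<union> S\<inverse>)\<^sup>*"
    and "a \<notin> Domain S" and "b \<notin> Domain S"
  shows "a = b"
proof -
  obtain w where "(a, w) \<in> S\<^sup>*" "(b, w) \<in> S\<^sup>*"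
    using single_valued_common_successor[OF assms(1,2)] by blast
  then have "w = a" and "w = b"
    using assms(3,4) by (auto elim: converse_rtranclE)
  then show ?thesis by simp
qed

lemma single_valued_stack_step: "single_valued (stack_step E fe)"
  unfolding single_valued_def stack_step_def by auto

lemma stack_stepD:
  assumes "graph_map V E src tgt fv fe" and "(x, y) \<in> stack_step E fe"
  shows "x \<in> E \<and> y \<in> E \<and> (\<exists>c. fe x = [(y, c)])"
proof -
  from assms(2) have x: "x \<in> E" "\<not> mixing fe x" "y = fst (hd (fe x))"
    unfolding stack_step_def by auto
  with assms(1) have "fe x \<noteq> []" and edges: "fst ` set (fe x) \<subseteq> E"
    unfolding graph_map_def is_edge_path_def by auto
  with x(2) obtain h where h: "fe x = [h]"
    unfolding mixing_def by (cases "fe x") auto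
  obtain c where "h = (y, c)"
    using x(3) h by (cases h) simp
  with x(1) edges h show ?thesis by simp
qed

lemma not_Domain_stack_step_iff:
  "e \<in> E \<Longrightarrow> e \<notin> Domain (stack_step E fe) \<longleftrightarrow> mixing fe e \<or> surplus E fe e"
  unfolding stack_step_def by auto

lemma fpow_stack_step_relpow:
  assumes "graph_map V E src tgt fv fe" and "(x, z) \<in> stack_step E fe ^^ m"
  shows "\<exists>b'. fpow fe m (x, b) = [(z, b')]"
  using assms(2)
proof (induction m arbitrary: x b)
  case 0
  then show ?case by (simp add: fpow_def)
next
  case (Suc m)
  then obtain y where xy: "(x, y) \<in> stack_step E fe" and yz: "(y, z) \<in> stack_step E fe ^^ m"
    using relpow_Suc_D2[of x z m] by blast
  from stack_stepD[OF assms(1) xy] obtain c where "fe x = [(y, c)]" by blast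
  then have "fpath fe [(x, b)] = [(y, b = c)]"
    by (simp add: fpath_def rev_path_def)
  then have "fpow fe (Suc m) (x, b) = fpow fe m (y, b = c)"
    by (simp add: fpow_def funpow_Suc_right del: funpow.simps)
  then show ?case using Suc.IH[OF yz] by simp
qed

lemma stack_step_orbit_terminates:
  assumes gm: "graph_map V E src tgt fv fe" and exp: "expanding E fe" and "x \<in> E"
  shows "\<exists>m z. (x, z) \<in> stack_step E fe ^^ m \<and> z \<notin> Domain (stack_step E fe)"
proof (rule ccontr)
  assume nonterminating: "\<not> ?thesis"
  have "\<exists>z. (x, z) \<in> stack_step E fe ^^ m" for m
  proof (induction m)
    case (Suc m)
    then obtain z where xz: "(x, z) \<in> stack_step E fe ^^ m" by blast
    then obtain y where "(z, y) \<in> stack_step E fe" using nonterminating by blast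
    with xz show ?case by (meson relpow_Suc_I)
  qed auto
  then have "length (fpow fe m (x, True)) = 1" for m
    using fpow_stack_step_relpow[OF gm] by (metis length_Cons list.size(3) One_nat_def)
  moreover obtain N where "length (fpow fe N (x, True)) \<ge> 2"
    using exp \<open>x \<in> E\<close> unfolding expanding_def by blast
  ultimately show False by simp
qed

lemma stack_equiv_eq:
  assumes "graph_map V E src tgt fv fe"
  shows "stack_equiv E fe = (stack_step E fe \<union> (stack_step E fe)\<inverse>)\<^sup>* \<inter> E \<times> E"
proof -
  let ?T = "stack_step E fe \<union> (stack_step E fe)\<inverse>"
  have "?T \<subseteq> E \<times> E"
    using stack_stepD[OF assms] by fast
  then have "?T\<^sup>+ \<subseteq> E \<times> E"
    by (rule trancl_subset_Sigma)
  then have "?T\<^sup>+ \<subseteq> ?T\<^sup>* \<inter> E \<times> E"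
    by auto
  moreover have "?T\<^sup>* \<inter> E \<times> E \<subseteq> Id_on E \<union> ?T\<^sup>+"
    by (auto simp: rtrancl_eq_or_trancl)
  ultimately show ?thesis
    unfolding stack_equiv_def by auto
qed

lemma stack_closed_stack_step:
  assumes gm: "graph_map V E src tgt fv fe" and K: "K \<in> stacks E fe"
    and "x \<in> K" and xz: "(x, z) \<in> (stack_step E fe)\<^sup>*"
  shows "z \<in> K"
proof -
  let ?T = "stack_step E fe \<union> (stack_step E fe)\<inverse>"
  obtain a where K_eq: "K = stack_equiv E fe `` {a}"
    using K unfolding stacks_def quotient_def by blast
  have ax: "(a, x) \<in> ?T\<^sup>* \<inter> E \<times> E"
    using \<open>x \<in> K\<close> unfolding K_eq stack_equiv_eq[OF gm] by simp
  have "(x, z) \<in> ?T\<^sup>*"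
    using xz rtrancl_mono[of "stack_step E fe" ?T] by blast
  moreover have "z \<in> E"
    using xz ax by (induction rule: rtrancl_induct) (auto dest: stack_stepD[OF gm])
  ultimately have "(a, z) \<in> ?T\<^sup>* \<inter> E \<times> E"
    using ax by (auto intro: rtrancl_trans)
  then show ?thesis
    unfolding K_eq stack_equiv_eq[OF gm] by simp
qed

lemma final_edge_eqI:
  assumes gm: "graph_map V E src tgt fv fe" and K: "K \<in> stacks E fe"
    and "z \<in> K" and "mixing fe z \<or> surplus E fe z"
  shows "final_edge E fe K = z"
  unfolding final_edge_def
proof (rule the_equality)
  let ?T = "stack_step E fe \<union> (stack_step E fe)\<inverse>"
  fix y assume y: "y \<in> K \<and> (mixing fe y \<or> surplus E fe y)"
  obtain a where K_eq: "K = stack_equiv E fe `` {a}"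
    using K unfolding stacks_def quotient_def by blast
  have ay: "(a, y) \<in> ?T\<^sup>* \<inter> E \<times> E" and az: "(a, z) \<in> ?T\<^sup>* \<inter> E \<times> E"
    using y \<open>z \<in> K\<close> unfolding K_eq stack_equiv_eq[OF gm] by simp_all
  have "sym (?T\<^sup>*)"
    by (rule sym_rtrancl[OF sym_Un_converse])
  then have "(y, a) \<in> ?T\<^sup>*"
    using ay by (blast dest: symD)
  then have "(y, z) \<in> ?T\<^sup>*"
    using az by (blast intro: rtrancl_trans)
  moreover have "y \<notin> Domain (stack_step E fe)" "z \<notin> Domain (stack_step E fe)"
    using not_Domain_stack_step_iff[of y E fe] not_Domain_stack_step_iff[of z E fe] y ay az assms(4)
    by auto
  ultimately show "y = z"
    by (rule single_valued_terminal_unique[OF single_valued_stack_step])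
qed (use assms in simp)

lemma stack_subset_edges:
  assumes "graph_map V E src tgt fv fe" and "K \<in> stacks E fe"
  shows "K \<subseteq> E"
  using assms(2) unfolding stacks_def quotient_def stack_equiv_eq[OF assms(1)] by blast

lemma traverses_final_edge:
  assumes gm: "graph_map V E src tgt fv fe" and exp: "expanding E fe"
    and L: "L \<in> stacks E fe" and "x \<in> L"
  shows "\<exists>m. traverses (fpow fe m (x, b)) (final_edge E fe L)"
proof -
  have "x \<in> E"
    using stack_subset_edges[OF gm L] \<open>x \<in> L\<close> by blast
  then obtain m z where xz: "(x, z) \<in> stack_step E fe ^^ m"
    and z: "z \<notin> Domain (stack_step E fe)"
    using stack_step_orbit_terminates[OF gm exp] by blast
  have "z \<in> L"
    using stack_closed_stack_step[OF gm L \<open>x \<in> L\<close> relpow_imp_rtrancl[OF xz]] .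
  moreover have "mixing fe z \<or> surplus E fe z"
    using not_Domain_stack_step_iff[of z E fe] stack_subset_edges[OF gm L] \<open>z \<in> L\<close> z by blast
  ultimately have final: "final_edge E fe L = z"
    by (rule final_edge_eqI[OF gm L])
  obtain b' where "fpow fe m (x, b) = [(z, b')]"
    using fpow_stack_step_relpow[OF gm xz] by blast
  then have "traverses (fpow fe m (x, b)) (final_edge E fe L)"
    by (simp add: final traverses_def)
  then show ?thesis ..
qed

lemma sg_edge_traverses:
  assumes gm: "graph_map V E src tgt fv fe" and exp: "expanding E fe"
    and "sg_edge E fe K L"
  shows "\<exists>s\<ge>1. traverses (fpow fe s (final_edge E fe K, True)) (final_edge E fe L)"
proof -
  obtain x where L: "L \<in> stacks E fe" and x: "x \<in> set (fe (final_edge E fe K))" "fst x \<in> L"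
    using \<open>sg_edge E fe K L\<close> unfolding sg_edge_def by blast
  have "traverses (fpow fe 1 (final_edge E fe K, True)) (fst x)"
    using x(1) by (simp add: fpow_def fpath_def traverses_def)
  moreover obtain m where "traverses (fpow fe m (fst x, True)) (final_edge E fe L)"
    using traverses_final_edge[OF gm exp L x(2)] by blast
  ultimately have "traverses (fpow fe (1 + m) (final_edge E fe K, True)) (final_edge E fe L)"
    by (rule traverses_fpow_add)
  then show ?thesis
    by (intro exI[of _ "1 + m"]) simp
qed

lemma traverses_fpow_sg_len:
  assumes "graph_map V E src tgt fv fe" and "expanding E fe" and "sg_edge E fe K L"
  shows "traverses (fpow fe (sg_len E fe K L) (final_edge E fe K, True)) (final_edge E fe L)"
proof -
  obtain s where "s \<ge> 1 \<and> traverses (fpow fe s (final_edge E fe K, True)) (final_edge E fe L)"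
    using sg_edge_traverses[OF assms] by blast
  then have "sg_len E fe K L \<ge> 1 \<and>
      traverses (fpow fe (sg_len E fe K L) (final_edge E fe K, True)) (final_edge E fe L)"
    unfolding sg_len_def by (rule LeastI)
  then show ?thesis ..
qed

theorem lemma4p5:
  fixes V :: "'v set" and E :: "'e set" and src tgt :: "'e \<Rightarrow> 'v"
    and fv :: "'v \<Rightarrow> 'v" and fe :: "'e \<Rightarrow> 'e oedge list"
    and Ks :: "'e set list" and d :: nat
  assumes "graph_map V E src tgt fv fe"
    and "irreducible_map V E src tgt fe"
    and "expanding E fe"
    and "sg_path E fe Ks"
    and "sg_path_len E fe Ks = d"
  shows "traverses (fpow fe d (final_edge E fe (hd Ks), True)) (final_edge E fe (last Ks))"
proof -
  let ?a = "\<lambda>i. final_edge E fe (Ks ! i)"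
  let ?s = "\<lambda>i. sg_len E fe (Ks ! i) (Ks ! Suc i)"
  let ?n = "length Ks - 1"
  have "traverses (fpow fe (?s i) (?a i, True)) (?a (Suc i))" if "i < ?n" for i
    using assms(4) that traverses_fpow_sg_len[OF assms(1,3)] unfolding sg_path_def by simp
  then have "traverses (fpow fe (\<Sum>i<?n. ?s i) (?a 0, True)) (?a ?n)"
    by (rule traverses_fpow_sum)
  moreover have "(\<Sum>i<?n. ?s i) = d"
    using assms(5) unfolding sg_path_len_def by simp
  moreover have "Ks \<noteq> []"
    using assms(4) unfolding sg_path_def by auto
  ultimately show ?thesis
    by (simp add: hd_conv_nth last_conv_nth)
qed

end
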